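(* Let $k,n$ be integers with $k\geq 4$ and $n\geq 1$. (1) If $4\leq k\leq 2^{\mathrm{R}_3(\mathcal{B}_n)+n}$, then $\mathrm{GR}_k(\mathcal{B}_2:\mathcal{B}_n)\leq \mathrm{R}_3(\mathcal{B}_n)+n$. (2) If $k>2^{\mathrm{R}_3(\mathcal{B}_n)+n}$, then the pair $(\mathcal{B}_2,\mathcal{B}_n)$ is $(\mathcal{B}_2:\mathcal{B}_n)_k$-good.
   Context: $\mathcal{B}_N$ denotes the Boolean lattice of all subsets of $[N]$ ordered by inclusion. An induced copy of a poset $\mathcal{P}$ in a poset $\mathcal{Q}$ is the image of an injection $f:\mathcal{P}\to\mathcal{Q}$ with $f(X)\le f(Y)$ iff $X\le Y$. A $k$-coloring of $\mathcal{B}_N$ is exact if it uses colors from $[k]$ and every color is used. Monochromatic: all sets share a color; rainbow: pairwise distinct colors. $\mathrm{R}_k(\mathcal{P})$ (Boolean Ramsey number) is the smallest $n$ such that every coloring of $\mathcal{B}_n$ with $k$ colors contains a monochromatic induced copy of $\mathcal{P}$. The pair $(\mathcal{Q},\mathcal{P})$ is $(\mathcal{Q}:\mathcal{P})_k$-good if for every positive integer $N$, every exact $k$-coloring of $\mathcal{B}_N$ contains a rainbow induced copy of $\mathcal{Q}$ or a monochromatic induced copy of $\mathcal{P}$. For a pair that is not good, $\mathrm{GR}_k(\mathcal{Q}:\mathcal{P})$ is the smallest integer $n$ such that for every $N\ge n$, every exact $k$-coloring of $\mathcal{B}_N$ contains a rainbow induced copy of $\mathcal{Q}$ or a monochromatic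 induced copy of $\mathcal{P}$. *)

theory Defs
  imports Main
begin

definition boolean_lattice :: "nat \<Rightarrow> nat set set" where
  "boolean_lattice N = Pow {..<N}"

definition induced_copy :: "nat set set \<Rightarrow> nat \<Rightarrow> nat set set \<Rightarrow> bool" where
  "induced_copy P N S \<longleftrightarrow>
     (\<exists>f. inj_on f P \<and> f ` P \<subseteq> boolean_lattice N \<and>
          (\<forall>X\<in>P. \<forall>Y\<in>P. f X \<subseteq> f Y \<longleftrightarrow> X \<subseteq> Y) \<and> S = f ` P)"

definition coloring :: "nat \<Rightarrow> nat \<Rightarrow> (nat set \<Rightarrow> nat) \<Rightarrow> bool" where
  "coloring k N c \<longleftrightarrow> c ` boolean_lattice N \<subseteq> {1..k}"

definition exact_coloring :: "nat \<Rightarrow> nat \<Rightarrow> (nat set \<Rightarrow> nat) \<Rightarrow> bool" where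
  "exact_coloring k N c \<longleftrightarrow> c ` boolean_lattice N = {1..k}"

definition monochromatic :: "(nat set \<Rightarrow> nat) \<Rightarrow> nat set set \<Rightarrow> bool" where
  "monochromatic c S \<longleftrightarrow> (\<forall>X\<in>S. \<forall>Y\<in>S. c X = c Y)"

definition rainbow :: "(nat set \<Rightarrow> nat) \<Rightarrow> nat set set \<Rightarrow> bool" where
  "rainbow c S \<longleftrightarrow> inj_on c S"

definition boolean_ramsey :: "nat \<Rightarrow> nat set set \<Rightarrow> nat" where
  "boolean_ramsey k P = (LEAST n. \<forall>c. coloring k n c \<longrightarrow>
      (\<exists>S. induced_copy P n S \<and> monochromatic c S))"

definition gr_property :: "nat \<Rightarrow> nat set set \<Rightarrow> nat set set \<Rightarrow> nat \<Rightarrow> bool" where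
  "gr_property k Q P N \<longleftrightarrow> (\<forall>c. exact_coloring k N c \<longrightarrow>
      (\<exists>S. induced_copy Q N S \<and> rainbow c S) \<or> (\<exists>S. induced_copy P N S \<and> monochromatic c S))"

definition gr_good :: "nat \<Rightarrow> nat set set \<Rightarrow> nat set set \<Rightarrow> bool" where
  "gr_good k Q P \<longleftrightarrow> (\<forall>N. N > 0 \<longrightarrow> gr_property k Q P N)"

definition gallai_ramsey :: "nat \<Rightarrow> nat set set \<Rightarrow> nat set set \<Rightarrow> nat" where
  "gallai_ramsey k Q P = (LEAST n. \<forall>N\<ge>n. gr_property k Q P N)"

end

theory Submission
  imports Defs "HOL-Library.FuncSet"
begin

text \<open>Let \<open>R = R\<^sub>3(B\<^sub>n)\<close>, \<open>N \<ge> R + n\<close>, and consider a colouring of \<open>B\<^sub>N\<close> without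
  rainbow \<open>B\<^sub>2\<close>. If some \<open>W\<close> with \<open>|W| > N - n\<close> is coloured differently from \<open>\<emptyset>\<close>, take a
  smallest \<open>P \<subseteq> W\<close> whose colour differs from both, and \<open>x \<in> P\<close>. A set \<open>Z \<subseteq> W - {x}\<close> of a
  fourth colour is incomparable with \<open>P\<close>, so \<open>\<emptyset>, P, Z, W\<close> would be a rainbow \<open>B\<^sub>2\<close>. Hence
  the subsets of \<open>W - {x}\<close> carry at most three colours, and \<open>|W - {x}| \<ge> R\<close> yields a
  monochromatic \<open>B\<^sub>n\<close>. Otherwise all sets of size \<open>> N - n\<close> share the colour of \<open>\<emptyset>\<close>, and
  \<open>\<emptyset>\<close> together with the sets \<open>[n, N) \<union> S\<close>, \<open>\<emptyset> \<noteq> S \<subseteq> [n]\<close>, is a monochromatic \<open>B\<^sub>n\<close>.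
  Part (2) follows because an exact \<open>k\<close>-colouring of \<open>B\<^sub>N\<close> forces \<open>k \<le> 2\<^sup>N\<close>.

  That \<open>R\<^sub>k(B\<^sub>n)\<close> exists is the product argument: with \<open>L\<close> the number of \<open>k\<close>-colourings of \<open>B\<^sub>M\<close>,
  two of the cubes \<open>[M, M + i) \<union> B\<^sub>M\<close>, \<open>i \<le> L\<close>, are coloured alike, and a monochromatic \<open>B\<^sub>n\<close> in
  the first one doubles along \<open>[M, M + i) \<subset> [M, M + j)\<close> to a monochromatic \<open>B\<^bsub>n+1\<^esub>\<close>.\<close>

definition boolean_arrow :: "nat \<Rightarrow> nat \<Rightarrow> nat set set \<Rightarrow> bool" where
  "boolean_arrow k N P \<longleftrightarrow>
     (\<forall>c. coloring k N c \<longrightarrow> (\<exists>S. induced_copy P N S \<and> monochromatic c S))"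

lemma boolean_ramsey_eq_Least: "boolean_ramsey k P = (LEAST N. boolean_arrow k N P)"
  by (simp add: boolean_ramsey_def boolean_arrow_def)

lemma induced_copyI:
  assumes "\<And>X. X \<in> P \<Longrightarrow> f X \<subseteq> {..<N}"
    and "\<And>X Y. X \<in> P \<Longrightarrow> Y \<in> P \<Longrightarrow> f X \<subseteq> f Y \<longleftrightarrow> X \<subseteq> Y"
  shows "induced_copy P N (f ` P)"
proof -
  have "inj_on f P"
    by (rule inj_onI) (metis assms(2) subset_antisym order_refl)
  then show ?thesis
    using assms unfolding induced_copy_def boolean_lattice_def by blast
qed

lemma induced_copy_subset: "induced_copy P N S \<Longrightarrow> S \<subseteq> Pow {..<N}"
  unfolding induced_copy_def boolean_lattice_def by blast

lemma induced_copy_image: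
  assumes "induced_copy P R S" "inj_on h {..<R}" "h ` {..<R} \<subseteq> {..<N}"
  shows "induced_copy P N ((`) h ` S)"
proof -
  obtain f where f: "f ` P \<subseteq> Pow {..<R}" "\<forall>X\<in>P. \<forall>Y\<in>P. f X \<subseteq> f Y \<longleftrightarrow> X \<subseteq> Y" "S = f ` P"
    using assms(1) unfolding induced_copy_def boolean_lattice_def by blast
  have h_subset_iff: "h ` A \<subseteq> h ` B \<longleftrightarrow> A \<subseteq> B" if "A \<subseteq> {..<R}" "B \<subseteq> {..<R}" for A B
    using assms(2) that unfolding inj_on_def by blast
  have f_range: "f X \<subseteq> {..<R}" if "X \<in> P" for X
    using f(1) that by blast
  have "induced_copy P N ((\<lambda>X. h ` f X) ` P)"
  proof (rule induced_copyI)
    show "h ` f X \<subseteq> {..<N}" if "X \<in> P" for X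
      using f_range[OF that] assms(3) by auto
    show "h ` f X \<subseteq> h ` f Y \<longleftrightarrow> X \<subseteq> Y" if "X \<in> P" "Y \<in> P" for X Y
      using h_subset_iff[OF f_range[OF that(1)] f_range[OF that(2)]] f(2) that by simp
  qed
  then show ?thesis
    by (simp add: f(3) image_image)
qed

lemma coloring_range: "coloring k N c \<Longrightarrow> X \<subseteq> {..<N} \<Longrightarrow> c X \<in> {1..k}"
  unfolding coloring_def boolean_lattice_def by blast

lemma pigeonhole_pair:
  assumes "finite F" "\<phi> ` {..card F} \<subseteq> F"
  obtains i j where "i < j" "j \<le> card F" "\<phi> i = \<phi> j"
proof -
  have "card (\<phi> ` {..card F}) < card {..card F}"
    using card_mono[OF assms] by simp
  then have "\<not> inj_on \<phi> {..card F}"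
    by (rule pigeonhole)
  then obtain x y where "x \<le> card F" "y \<le> card F" "x \<noteq> y" "\<phi> x = \<phi> y"
    unfolding inj_on_def by auto
  then show ?thesis
    using that by (metis linorder_neqE_nat)
qed

lemma extend_embedding_subset_iff:
  assumes e: "\<And>X Y. X \<subseteq> {..<n} \<Longrightarrow> Y \<subseteq> {..<n} \<Longrightarrow> e X \<subseteq> e Y \<longleftrightarrow> X \<subseteq> Y"
    and e_range: "\<And>X. X \<subseteq> {..<n} \<Longrightarrow> e X \<subseteq> D"
    and "A \<subset> B" "B \<inter> D = {}"
    and X: "X \<subseteq> {..<Suc n}" and Y: "Y \<subseteq> {..<Suc n}"
  shows "(if n \<in> X then B else A) \<union> e (X - {n}) \<subseteq> (if n \<in> Y then B else A) \<union> e (Y - {n})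
     \<longleftrightarrow> X \<subseteq> Y"
proof -
  have X': "X - {n} \<subseteq> {..<n}" and Y': "Y - {n} \<subseteq> {..<n}"
    using X Y by auto
  have separate: "P \<union> E \<subseteq> Q \<union> E' \<longleftrightarrow> P \<subseteq> Q \<and> E \<subseteq> E'"
    if "P \<inter> D = {}" "Q \<inter> D = {}" "E \<subseteq> D" "E' \<subseteq> D" for P Q E E'
    using that by blast
  have "(if n \<in> X then B else A) \<union> e (X - {n}) \<subseteq> (if n \<in> Y then B else A) \<union> e (Y - {n})
     \<longleftrightarrow> (if n \<in> X then B else A) \<subseteq> (if n \<in> Y then B else A) \<and> e (X - {n}) \<subseteq> e (Y - {n})"
    by (rule separate) (use e_range[OF X'] e_range[OF Y'] assms(3,4) in auto)
  also have "\<dots> \<longleftrightarrow> (n \<in> X \<longrightarrow> n \<in> Y) \<and> X - {n} \<subseteq> Y - {n}"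
    using e[OF X' Y'] assms(3) by auto
  also have "\<dots> \<longleftrightarrow> X \<subseteq> Y"
    by auto
  finally show ?thesis .
qed

lemma induced_copy_double:
  assumes e_range: "\<And>X. X \<subseteq> {..<n} \<Longrightarrow> e X \<subseteq> {..<M}"
    and e_subset_iff: "\<And>X Y. X \<subseteq> {..<n} \<Longrightarrow> Y \<subseteq> {..<n} \<Longrightarrow> e X \<subseteq> e Y \<longleftrightarrow> X \<subseteq> Y"
    and "i < j" "M + j \<le> N"
  shows "induced_copy (boolean_lattice (Suc n)) N
    ((\<lambda>X. (if n \<in> X then {M..<M + j} else {M..<M + i}) \<union> e (X - {n})) ` boolean_lattice (Suc n))"
proof (rule induced_copyI)
  have blocks: "{M..<M + i} \<subset> {M..<M + j}" "{M..<M + j} \<inter> {..<M} = {}"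
    using \<open>i < j\<close> by auto
  fix X Y assume "X \<in> boolean_lattice (Suc n)" "Y \<in> boolean_lattice (Suc n)"
  then have X: "X \<subseteq> {..<Suc n}" and Y: "Y \<subseteq> {..<Suc n}"
    by (auto simp: boolean_lattice_def)
  have "e (X - {n}) \<subseteq> {..<M}"
    using X by (intro e_range) auto
  then show "(if n \<in> X then {M..<M + j} else {M..<M + i}) \<union> e (X - {n}) \<subseteq> {..<N}"
    using \<open>i < j\<close> \<open>M + j \<le> N\<close> by auto
  show "(if n \<in> X then {M..<M + j} else {M..<M + i}) \<union> e (X - {n})
      \<subseteq> (if n \<in> Y then {M..<M + j} else {M..<M + i}) \<union> e (Y - {n}) \<longleftrightarrow> X \<subseteq> Y"
    by (rule extend_embedding_subset_iff[OF e_subset_iff e_range blocks X Y])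
qed

lemma coloring_translates_repeat:
  assumes c: "coloring k (M + card (Pow {..<M} \<rightarrow>\<^sub>E {1..k})) c"
  obtains i j where "i < j" "j \<le> card (Pow {..<M} \<rightarrow>\<^sub>E {1..k})"
    and "\<And>Y. Y \<subseteq> {..<M} \<Longrightarrow> c ({M..<M + i} \<union> Y) = c ({M..<M + j} \<union> Y)"
proof -
  define F where "F = Pow {..<M} \<rightarrow>\<^sub>E {1..k}"
  define \<phi> where "\<phi> i = restrict (\<lambda>Y. c ({M..<M + i} \<union> Y)) (Pow {..<M})" for i
  have "\<phi> i \<in> F" if "i \<le> card F" for i
  proof -
    have "{M..<M + i} \<union> Y \<subseteq> {..<M + card F}" if "Y \<subseteq> {..<M}" for Y
      using that \<open>i \<le> card F\<close> by auto
    then have "(\<lambda>Y. c ({M..<M + i} \<union> Y)) \<in> Pow {..<M} \<rightarrow> {1..k}"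
      using coloring_range[OF c[folded F_def]] by blast
    then show ?thesis
      unfolding F_def \<phi>_def by simp
  qed
  moreover have "finite F"
    unfolding F_def by (simp add: finite_PiE)
  ultimately obtain i j where ij: "i < j" "j \<le> card F" and "\<phi> i = \<phi> j"
    using pigeonhole_pair[of F \<phi>] by blast
  have "c ({M..<M + i} \<union> Y) = c ({M..<M + j} \<union> Y)" if "Y \<subseteq> {..<M}" for Y
    using fun_cong[OF \<open>\<phi> i = \<phi> j\<close>, of Y] that unfolding \<phi>_def by simp
  with ij show ?thesis
    unfolding F_def by (rule that)
qed

lemma induced_copy_boolean_latticeE:
  assumes "induced_copy (boolean_lattice n) N S"
  obtains e where "\<And>X. X \<subseteq> {..<n} \<Longrightarrow> e X \<subseteq> {..<N}"
    and "\<And>X Y. X \<subseteq> {..<n} \<Longrightarrow> Y \<subseteq> {..<n} \<Longrightarrow> e X \<subseteq> e Y \<longleftrightarrow> X \<subseteq> Y"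
    and "S = e ` Pow {..<n}"
proof -
  obtain e where "e ` Pow {..<n} \<subseteq> Pow {..<N}"
    and "\<forall>X\<in>Pow {..<n}. \<forall>Y\<in>Pow {..<n}. e X \<subseteq> e Y \<longleftrightarrow> X \<subseteq> Y" and "S = e ` Pow {..<n}"
    using assms unfolding induced_copy_def boolean_lattice_def by auto
  then show ?thesis
    by (intro that[of e]) auto
qed

lemma boolean_arrow_Suc:
  assumes M: "boolean_arrow k M (boolean_lattice n)"
  shows "boolean_arrow k (M + card (Pow {..<M} \<rightarrow>\<^sub>E {1..k})) (boolean_lattice (Suc n))"
  unfolding boolean_arrow_def
proof (intro allI impI)
  define L where "L = card (Pow {..<M} \<rightarrow>\<^sub>E {1..k})"
  fix c assume c: "coloring k (M + L) c"
  obtain i j where ij: "i < j" "j \<le> L"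
    and repeat: "\<And>Y. Y \<subseteq> {..<M} \<Longrightarrow> c ({M..<M + i} \<union> Y) = c ({M..<M + j} \<union> Y)"
    using coloring_translates_repeat[OF c[unfolded L_def]] unfolding L_def by blast
  define c' where "c' Y = c ({M..<M + i} \<union> Y)" for Y
  have "{M..<M + i} \<union> Y \<subseteq> {..<M + L}" if "Y \<subseteq> {..<M}" for Y
    using that ij by auto
  then have "coloring k M c'"
    using coloring_range[OF c] unfolding coloring_def boolean_lattice_def c'_def by blast
  then obtain S where S_copy: "induced_copy (boolean_lattice n) M S" and S_mono: "monochromatic c' S"
    using M unfolding boolean_arrow_def by blast
  obtain e where e_range: "\<And>X. X \<subseteq> {..<n} \<Longrightarrow> e X \<subseteq> {..<M}"
    and e_subset_iff: "\<And>X Y. X \<subseteq> {..<n} \<Longrightarrow> Y \<subseteq> {..<n} \<Longrightarrow> e X \<subseteq> e Y \<longleftrightarrow> X \<subseteq> Y"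
    and S: "S = e ` Pow {..<n}"
    using induced_copy_boolean_latticeE[OF S_copy] by metis
  define e' where "e' X = (if n \<in> X then {M..<M + j} else {M..<M + i}) \<union> e (X - {n})" for X
  have "induced_copy (boolean_lattice (Suc n)) (M + L) (e' ` boolean_lattice (Suc n))"
    unfolding e'_def using ij by (intro induced_copy_double[of n e M] e_range e_subset_iff) auto
  moreover have "c (e' X) = c' (e {})" if X: "X \<subseteq> {..<Suc n}" for X
  proof -
    have X': "X - {n} \<subseteq> {..<n}"
      using X by auto
    have "c (e' X) = c' (e (X - {n}))"
      using repeat[OF e_range[OF X']] unfolding e'_def c'_def by (cases "n \<in> X") simp_all
    also have "\<dots> = c' (e {})"
      using S_mono X' unfolding S monochromatic_def by blast
    finally show ?thesis .
  qed
  then have "monochromatic c (e' ` boolean_lattice (Suc n))"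
    unfolding monochromatic_def boolean_lattice_def by auto
  ultimately show "\<exists>S. induced_copy (boolean_lattice (Suc n)) (M + L) S \<and> monochromatic c S"
    by blast
qed

lemma boolean_arrow_zero: "boolean_arrow k 0 (boolean_lattice 0)"
  unfolding boolean_arrow_def
proof (intro allI impI exI conjI)
  show "induced_copy (boolean_lattice 0) 0 (id ` boolean_lattice 0)"
    by (rule induced_copyI) (auto simp: boolean_lattice_def)
  show "monochromatic c (id ` boolean_lattice 0)" for c
    by (simp add: monochromatic_def boolean_lattice_def)
qed

lemma boolean_arrow_exists: "\<exists>M. boolean_arrow k M (boolean_lattice n)"
proof (induction n)
  case 0
  then show ?case
    using boolean_arrow_zero by blast
next
  case (Suc n)
  then show ?case
    using boolean_arrow_Suc by blast
qed

lemma boolean_arrow_boolean_ramsey: "boolean_arrow k (boolean_ramsey k (boolean_lattice n)) (boolean_lattice n)"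
  unfolding boolean_ramsey_eq_Least by (rule LeastI_ex[OF boolean_arrow_exists])

lemma boolean_arrow_subcube:
  assumes arrow: "boolean_arrow k R P" and D: "D \<subseteq> {..<N}" "R \<le> card D"
    and few_colors: "card (c ` Pow D) \<le> k"
  shows "\<exists>S. induced_copy P N S \<and> monochromatic c S"
proof -
  have "finite D"
    using D(1) finite_subset by blast
  obtain h where h: "h ` {..<R} \<subseteq> D" "inj_on h {..<R}"
    using card_le_inj[of "{..<R}" D] \<open>finite D\<close> D(2) by auto
  obtain r where r: "r ` c ` Pow D \<subseteq> {1..k}" "inj_on r (c ` Pow D)"
    using card_le_inj[of "c ` Pow D" "{1..k}"] \<open>finite D\<close> few_colors by auto
  define c' where "c' Z = r (c (h ` Z))" for Z
  have h_Pow: "h ` Z \<in> Pow D" if "Z \<subseteq> {..<R}" for Z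
    using that h(1) by auto
  have "coloring k R c'"
    unfolding coloring_def boolean_lattice_def
  proof
    fix y assume "y \<in> c' ` Pow {..<R}"
    then obtain Z where "Z \<subseteq> {..<R}" "y = r (c (h ` Z))"
      unfolding c'_def by blast
    then show "y \<in> {1..k}"
      using r(1) h_Pow by (auto simp: image_subset_iff)
  qed
  then obtain S where S: "induced_copy P R S" "monochromatic c' S"
    using arrow unfolding boolean_arrow_def by blast
  have "induced_copy P N ((`) h ` S)"
    using induced_copy_image[OF S(1) h(2)] h(1) D(1) by blast
  moreover have "monochromatic c ((`) h ` S)"
    unfolding monochromatic_def
  proof (intro ballI)
    fix U V assume "U \<in> (`) h ` S" "V \<in> (`) h ` S"
    then obtain X Y where XY: "X \<in> S" "Y \<in> S" "U = h ` X" "V = h ` Y"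
      by blast
    then have "r (c U) = r (c V)"
      using S(2) unfolding monochromatic_def c'_def by blast
    moreover have "X \<subseteq> {..<R}" "Y \<subseteq> {..<R}"
      using induced_copy_subset[OF S(1)] XY by auto
    ultimately show "c U = c V"
      using r(2) h_Pow XY unfolding inj_on_def by blast
  qed
  ultimately show ?thesis
    by blast
qed

lemma rainbow_boolean_lattice_2:
  assumes W: "W \<subseteq> {..<N}" and "P \<subseteq> W" "Q \<subseteq> W" "\<not> P \<subseteq> Q" "\<not> Q \<subseteq> P"
    and injective: "inj_on c {{}, P, Q, W}"
  shows "\<exists>T. induced_copy (boolean_lattice 2) N T \<and> rainbow c T"
proof -
  define f where
    "f X = (if 0 \<in> X then (if 1 \<in> X then W else P) else (if 1 \<in> X then Q else {}))" for X :: "nat set"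
  have B2: "boolean_lattice 2 = {{}, {0}, {1}, {0, 1}}"
    unfolding boolean_lattice_def by (auto simp: lessThan_nat_numeral Pow_insert)
  have "induced_copy (boolean_lattice 2) N (f ` boolean_lattice 2)"
  proof (rule induced_copyI)
    show "f X \<subseteq> {..<N}" if "X \<in> boolean_lattice 2" for X
      using that assms(1-3) unfolding B2 f_def by auto
    show "f X \<subseteq> f Y \<longleftrightarrow> X \<subseteq> Y" if "X \<in> boolean_lattice 2" "Y \<in> boolean_lattice 2" for X Y
      using that assms(2-5) unfolding B2 f_def by auto
  qed
  moreover have "f ` boolean_lattice 2 = {{}, P, Q, W}"
    unfolding B2 f_def by auto
  ultimately show ?thesis
    using injective unfolding rainbow_def by metis
qed

lemma three_colors_below_if_no_rainbow:
  assumes W: "W \<subseteq> {..<N}" and "c W \<noteq> c {}"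
    and no_rainbow: "\<nexists>T. induced_copy (boolean_lattice 2) N T \<and> rainbow c T"
  obtains x p where "x \<in> W" "c ` Pow (W - {x}) \<subseteq> {c {}, c W, p}"
proof (cases "\<exists>Z\<subseteq>W. c Z \<notin> {c {}, c W}")
  case False
  have "W \<noteq> {}"
    using \<open>c W \<noteq> c {}\<close> by blast
  then obtain x where "x \<in> W"
    by blast
  with False show ?thesis
    by (intro that[of x "c {}"]) auto
next
  case True
  then obtain Z where "Z \<subseteq> W \<and> c Z \<notin> {c {}, c W}"
    by blast
  then obtain P where P_W: "P \<subseteq> W" and P_color: "c P \<notin> {c {}, c W}"
    and P_min: "\<forall>Z. Z \<subseteq> W \<and> c Z \<notin> {c {}, c W} \<longrightarrow> card P \<le> card Z"
    using ex_has_least_nat[of "\<lambda>Z. Z \<subseteq> W \<and> c Z \<notin> {c {}, c W}" Z card] by blast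
  have "P \<noteq> {}"
    using P_color by blast
  then obtain x where x: "x \<in> P"
    by blast
  have "c Z \<in> {c {}, c W, c P}" if Z: "Z \<subseteq> W - {x}" for Z
  proof (rule ccontr)
    assume Z_color: "c Z \<notin> {c {}, c W, c P}"
    have Z_W: "Z \<subseteq> W"
      using Z by blast
    have Z_P: "\<not> Z \<subseteq> P"
    proof
      assume "Z \<subseteq> P"
      with Z_color have "Z \<subset> P"
        by auto
      then have "card Z < card P"
        using W P_W finite_subset by (metis finite_lessThan psubset_card_mono)
      with P_min Z_W Z_color show False
        by auto
    qed
    have P_Z: "\<not> P \<subseteq> Z"
      using x Z by auto
    have "inj_on c {{}, P, Z, W}"
      using P_color Z_color \<open>c W \<noteq> c {}\<close> unfolding inj_on_def by auto
    then show False
      using rainbow_boolean_lattice_2[OF W P_W Z_W P_Z Z_P] no_rainbow by blast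
  qed
  with x P_W show ?thesis
    by (intro that[of x "c P"]) auto
qed

lemma induced_copy_top_layers:
  assumes "n \<le> N"
  obtains S where "induced_copy (boolean_lattice n) N S" "\<And>X. X \<in> S \<Longrightarrow> X = {} \<or> N - n < card X"
proof -
  define f where "f X = (if X = {} then {} else {n..<N} \<union> X)" for X :: "nat set"
  have copy: "induced_copy (boolean_lattice n) N (f ` boolean_lattice n)"
  proof (rule induced_copyI)
    show "f X \<subseteq> {..<N}" if "X \<in> boolean_lattice n" for X
      using that assms unfolding f_def boolean_lattice_def by auto
    have union_subset_iff: "{n..<N} \<union> X \<subseteq> {n..<N} \<union> Y \<longleftrightarrow> X \<subseteq> Y" if "X \<subseteq> {..<n}" for X Y
      using that by (auto simp: subset_iff) (meson leD)
    show "f X \<subseteq> f Y \<longleftrightarrow> X \<subseteq> Y" if "X \<in> boolean_lattice n" "Y \<in> boolean_lattice n" for X Y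
      using that union_subset_iff[of X] unfolding f_def boolean_lattice_def by auto
  qed
  have large: "N - n < card (f X)" if "X \<in> boolean_lattice n" "X \<noteq> {}" for X
  proof -
    have "finite X" "X \<inter> {n..<N} = {}"
      using that finite_subset unfolding boolean_lattice_def by auto
    then have "card (f X) = (N - n) + card X"
      using that(2) unfolding f_def by (simp add: card_Un_disjoint Int_commute)
    then show ?thesis
      using that(2) \<open>finite X\<close> by (simp add: card_gt_0_iff)
  qed
  show ?thesis
  proof (rule that[OF copy])
    fix Z assume "Z \<in> f ` boolean_lattice n"
    then obtain X where "X \<in> boolean_lattice n" "Z = f X"
      by blast
    with large show "Z = {} \<or> N - n < card Z"
      by (cases "X = {}") (auto simp: f_def)
  qed
qed

lemma rainbow_or_monochromatic:
  assumes arrow: "boolean_arrow 3 R (boolean_lattice n)" and "R + n \<le> N"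
  shows "(\<exists>S. induced_copy (boolean_lattice 2) N S \<and> rainbow c S) \<or>
         (\<exists>S. induced_copy (boolean_lattice n) N S \<and> monochromatic c S)"
proof (cases "\<exists>W\<subseteq>{..<N}. N - n < card W \<and> c W \<noteq> c {}")
  case True
  then obtain W where W: "W \<subseteq> {..<N}" "N - n < card W" "c W \<noteq> c {}"
    by blast
  show ?thesis
  proof (cases "\<exists>S. induced_copy (boolean_lattice 2) N S \<and> rainbow c S")
    case False
    then obtain x p where x: "x \<in> W" and colors: "c ` Pow (W - {x}) \<subseteq> {c {}, c W, p}"
      using three_colors_below_if_no_rainbow[OF W(1,3)] by metis
    have "card (c ` Pow (W - {x})) \<le> card {c {}, c W, p}"
      using colors by (simp add: card_mono)
    also have "\<dots> \<le> 3"
      by (simp add: card_insert_if)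
    finally have "card (c ` Pow (W - {x})) \<le> 3" .
    moreover have "R \<le> card (W - {x})"
      using W(2) x \<open>R + n \<le> N\<close> by simp
    ultimately show ?thesis
      using boolean_arrow_subcube[OF arrow] W(1) by blast
  qed blast
next
  case False
  obtain S where S: "induced_copy (boolean_lattice n) N S"
    and top: "\<And>X. X \<in> S \<Longrightarrow> X = {} \<or> N - n < card X"
    using induced_copy_top_layers \<open>R + n \<le> N\<close> by (metis le_add2 le_trans)
  have "c X = c {}" if "X \<in> S" for X
    using top[OF that] induced_copy_subset[OF S] that False by auto
  then have "monochromatic c S"
    unfolding monochromatic_def by simp
  with S show ?thesis
    by blast
qed

lemma exact_coloring_le_power: "exact_coloring k N c \<Longrightarrow> k \<le> 2 ^ N"
  using card_image_le[of "Pow {..<N}" c]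
  by (simp add: exact_coloring_def boolean_lattice_def card_Pow)

theorem theorem1p4:
  fixes k n :: nat
  assumes "k \<ge> 4" and "n \<ge> 1"
  shows "(k \<le> 2 ^ (boolean_ramsey 3 (boolean_lattice n) + n) \<longrightarrow>
           gallai_ramsey k (boolean_lattice 2) (boolean_lattice n)
             \<le> boolean_ramsey 3 (boolean_lattice n) + n)
       \<and> (k > 2 ^ (boolean_ramsey 3 (boolean_lattice n) + n) \<longrightarrow>
           gr_good k (boolean_lattice 2) (boolean_lattice n))"
proof -
  define R where "R = boolean_ramsey 3 (boolean_lattice n)"
  have arrow: "boolean_arrow 3 R (boolean_lattice n)"
    unfolding R_def by (rule boolean_arrow_boolean_ramsey)
  have large: "gr_property k (boolean_lattice 2) (boolean_lattice n) N" if "R + n \<le> N" for N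
    using rainbow_or_monochromatic[OF arrow that]
    unfolding gr_property_def by blast
  have "gallai_ramsey k (boolean_lattice 2) (boolean_lattice n) \<le> R + n"
    unfolding gallai_ramsey_def by (rule Least_le) (use large in blast)
  moreover have "gr_good k (boolean_lattice 2) (boolean_lattice n)" if "2 ^ (R + n) < k"
    unfolding gr_good_def
  proof (intro allI impI)
    fix N :: nat
    show "gr_property k (boolean_lattice 2) (boolean_lattice n) N"
    proof (cases "R + n \<le> N")
      case False
      then have "2 ^ N < k"
        using that power_increasing[of N "R + n" "2::nat"] by linarith
      then show ?thesis
        unfolding gr_property_def using exact_coloring_le_power leD by blast
    qed (rule large)
  qed
  ultimately show ?thesis
    unfolding R_def by blast
qed

end
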